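(* Let $q\neq-1$ be real and $n\ge1$. Then $$T_n(x,s,q)\,T_n(x,qs,q)-(x^2+qs)\,U_{n-1}(x,qs,q)\,U_{n-1}(x,q^2s,q)=q^{\binom{n+1}{2}}(-s)^n.$$
   Context: $T_0=1$, $T_1=x$, $T_n(x,s,q)=(1+q^{n-1})x\,T_{n-1}(x,s,q)+q^{n-1}s\,T_{n-2}(x,s,q)$ for $n\ge2$; $U_{-1}=0$, $U_0=1$, $U_n(x,s,q)=(1+q^{n})x\,U_{n-1}(x,s,q)+q^{n-1}s\,U_{n-2}(x,s,q)$ for $n\ge1$. *)

theory Defs
  imports Complex_Main
begin

fun T :: "nat \<Rightarrow> real \<Rightarrow> real \<Rightarrow> real \<Rightarrow> real" where
  "T 0 x s q = 1"
| "T (Suc 0) x s q = x"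
| "T (Suc (Suc n)) x s q =
     (1 + q ^ (Suc n)) * x * T (Suc n) x s q + q ^ (Suc n) * s * T n x s q"

text \<open>U_n for n \<ge> 0; the convention U_{-1} = 0 is built into the case n = 1:
  U_1 = (1+q) x U_0 + q^0 s U_{-1} = (1+q) x.\<close>
fun U :: "nat \<Rightarrow> real \<Rightarrow> real \<Rightarrow> real \<Rightarrow> real" where
  "U 0 x s q = 1"
| "U (Suc 0) x s q = (1 + q) * x"
| "U (Suc (Suc n)) x s q =
     (1 + q ^ (Suc (Suc n))) * x * U (Suc n) x s q + q ^ (Suc n) * s * U n x s q"

end

theory Submission
  imports Defs
begin

text \<open>Shifting U by one index and replacing s by q s gives a sequence V that obeys
  exactly the recurrence of T.  For the cross products
  D i j = T_i(s) T_j(qs) - (x^2 + qs) V_i(s) V_j(qs)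
  the recurrence can then be applied in either index separately, and an induction
  carrying the four neighbouring values D(n,n), D(n+1,n+1), D(n+1,n), D(n,n+1)
  closes.  The identity is polynomial.\<close>

fun V :: "nat \<Rightarrow> real \<Rightarrow> real \<Rightarrow> real \<Rightarrow> real" where
  "V 0 x s q = 0"
| "V (Suc j) x s q = U j x (q * s) q"

lemma V_Suc_Suc:
  "V (Suc (Suc n)) x s q = (1 + q ^ Suc n) * x * V (Suc n) x s q + q ^ Suc n * s * V n x s q"
  by (cases n) (simp_all add: algebra_simps)

definition cross :: "nat \<Rightarrow> nat \<Rightarrow> real \<Rightarrow> real \<Rightarrow> real \<Rightarrow> real" where
  "cross i j x s q =
     T i x s q * T j x (q * s) q - (x^2 + q * s) * V i x s q * V j x (q * s) q"

lemma cross_Suc_Suc_left: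
  "cross (Suc (Suc n)) j x s q
     = (1 + q ^ Suc n) * x * cross (Suc n) j x s q + q ^ Suc n * s * cross n j x s q"
  unfolding cross_def V_Suc_Suc by (simp add: algebra_simps)

lemma cross_Suc_Suc_right:
  "cross i (Suc (Suc n)) x s q
     = (1 + q ^ Suc n) * x * cross i (Suc n) x s q + q ^ Suc (Suc n) * s * cross i n x s q"
  unfolding cross_def V_Suc_Suc by (simp add: algebra_simps)

definition cross_diag :: "nat \<Rightarrow> real \<Rightarrow> real \<Rightarrow> real" where
  "cross_diag n s q = q ^ ((n + 1) choose 2) * (- s) ^ n"

lemma cross_diag_Suc: "cross_diag (Suc n) s q = q ^ Suc n * (- s) * cross_diag n s q"
proof -
  have "(Suc n + 1) choose 2 = ((n + 1) choose 2) + Suc n"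
    using binomial_Suc_Suc[of "Suc n" 1] by (simp add: numeral_2_eq_2 del: binomial_Suc_Suc)
  then show ?thesis
    unfolding cross_diag_def by (simp add: power_add algebra_simps)
qed

lemma cross_neighbours:
  "cross n n x s q = cross_diag n s q
   \<and> cross (Suc n) (Suc n) x s q = cross_diag (Suc n) s q
   \<and> cross (Suc n) n x s q = q ^ n * x * cross_diag n s q
   \<and> cross n (Suc n) x s q = x * cross_diag n s q"
proof (induction n)
  case 0
  show ?case
    by (simp add: cross_def cross_diag_def numeral_2_eq_2 power2_eq_square algebra_simps)
next
  case (Suc n)
  then have diag: "cross n n x s q = cross_diag n s q"
    and diag1: "cross (Suc n) (Suc n) x s q = q ^ Suc n * (- s) * cross_diag n s q"
    and below: "cross (Suc n) n x s q = q ^ n * x * cross_diag n s q"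
    and above: "cross n (Suc n) x s q = x * cross_diag n s q"
    by (simp_all add: cross_diag_Suc)
  have below1: "cross (Suc (Suc n)) (Suc n) x s q = q ^ Suc n * x * cross_diag (Suc n) s q"
    unfolding cross_Suc_Suc_left diag1 above cross_diag_Suc by (simp add: algebra_simps)
  have above1: "cross (Suc n) (Suc (Suc n)) x s q = x * cross_diag (Suc n) s q"
    unfolding cross_Suc_Suc_right diag1 below cross_diag_Suc by (simp add: algebra_simps)
  have "cross n (Suc (Suc n)) x s q
          = (1 + q ^ Suc n) * x * (x * cross_diag n s q) + q ^ Suc (Suc n) * s * cross_diag n s q"
    unfolding cross_Suc_Suc_right diag above ..
  then have diag2: "cross (Suc (Suc n)) (Suc (Suc n)) x s q = cross_diag (Suc (Suc n)) s q"
    unfolding cross_Suc_Suc_left[of n] above1 cross_diag_Suc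
    by (simp add: algebra_simps)
  show ?case
    using diag1 diag2 below1 above1 by (simp add: cross_diag_Suc)
qed

theorem theorem2p10:
  fixes x s q :: real and n :: nat
  assumes "q \<noteq> -1" and "n \<ge> 1"
  shows "T n x s q * T n x (q * s) q
           - (x^2 + q * s) * U (n - 1) x (q * s) q * U (n - 1) x (q^2 * s) q
         = q ^ ((n + 1) choose 2) * (- s) ^ n"
proof -
  obtain m where n: "n = Suc m"
    using assms(2) by (cases n) auto
  have "q * (q * s) = q^2 * s"
    by (simp add: power2_eq_square)
  then have "cross n n x s q
      = T n x s q * T n x (q * s) q
          - (x^2 + q * s) * U (n - 1) x (q * s) q * U (n - 1) x (q^2 * s) q"
    unfolding cross_def n by (simp only: V.simps diff_Suc_1)
  then show ?thesis
    using cross_neighbours[of n x s q] by (simp add: cross_diag_def)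
qed

end
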